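(* Let $n\ge 1$ and $k\ge 1$ be integers, let $A=(a_{pq})$ be a real $n\times n$ matrix, and let $j\in\{1,\dots,n\}$ be such that $a_{1j}>0$. Suppose $\lambda>0$ is a simple eigenvalue of $A$ and $A\mathbf u=\lambda\mathbf u$, $\mathbf v^TA=\lambda\mathbf v^T$ for some entrywise positive vectors $\mathbf u,\mathbf v\in\mathbb R^n$. Define the real $(k+n)\times(k+n)$ matrix $B=(b_{pq})$ by $$b_{pq}=\begin{cases} 2\lambda,&\text{if }p=q\in\{1,\dots,k\};\\ -\lambda,&\text{if }(p,q)\in\{(k,k+j)\}\cup\{(1,2),(2,3),\dots,(k-1,k)\};\\ -a_{1j},&\text{if }(p,q)=(k+1,1);\\ a_{p-k,q-k},&\text{if }p,q\in\{k+1,\dots,k+n\}\text{ and }(p,q)\neq(k+1,k+j);\\ 2a_{1j},&\text{if }(p,q)=(k+1,k+j);\\ 0,&\text{otherwise}. \end{cases}$$ Then $\lambda$ is a simple eigenvalue of $B$, and $B\mathbf w=\lambda\mathbf w$, $\mathbf z^TB=\lambda\mathbf z^T$, where $w_i=u_j$ and $z_i=\frac{a_{1j}v_1}{\lambda}$ for $1\le i\le k$, and $w_i=u_{i-k}$, $z_i=v_{i-k}$ for $k+1\le i\le k+n$. Consequently, $B$ is algebraically positive.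
   Context: A real square matrix $M$ is algebraically positive if there is a real polynomial $f$ such that every entry of $f(M)$ is positive. A simple eigenvalue is one of algebraic multiplicity one. *)

theory Defs
  imports "Jordan_Normal_Form.Char_Poly"
begin

definition mat_poly_eval :: "real poly \<Rightarrow> real mat \<Rightarrow> real mat" where
  "mat_poly_eval f M = mat (dim_row M) (dim_col M)
     (\<lambda>(p,q). \<Sum>i\<le>degree f. coeff f i * (M ^\<^sub>m i) $$ (p,q))"

definition algebraically_positive :: "real mat \<Rightarrow> bool" where
  "algebraically_positive M \<longleftrightarrow> square_mat M \<and>
     (\<exists>f :: real poly. \<forall>p < dim_row M. \<forall>q < dim_col M. mat_poly_eval f M $$ (p,q) > 0)"

definition simple_eigenvalue :: "real mat \<Rightarrow> real \<Rightarrow> bool" where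
  "simple_eigenvalue A l \<longleftrightarrow> order l (char_poly A) = 1"

text \<open>The matrix B of the theorem, written with the paper's 1-based indices:
  entry (p,q) (1-based) is stored at position (p-1,q-1); a p q = A (p-1, q-1).\<close>
definition thm23_B :: "nat \<Rightarrow> nat \<Rightarrow> real mat \<Rightarrow> nat \<Rightarrow> real \<Rightarrow> real mat" where
  "thm23_B n k A j l = mat (k+n) (k+n) (\<lambda>(p0,q0).
     let p = p0 + 1; q = q0 + 1; a = (\<lambda>r s. A $$ (r - 1, s - 1)) in
     if p = q \<and> p \<in> {1..k} then 2 * l
     else if (p,q) \<in> {(k, k+j)} \<union> {(i, i+1) | i. 1 \<le> i \<and> i \<le> k - 1} then - l
     else if (p,q) = (k+1, 1) then - a 1 j
     else if p \<in> {k+1..k+n} \<and> q \<in> {k+1..k+n} \<and> (p,q) \<noteq> (k+1, k+j) then a (p-k) (q-k)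
     else if (p,q) = (k+1, k+j) then 2 * a 1 j
     else 0)"

end

theory Submission
  imports Defs
begin

text \<open>For an eigenvector w of M with w_0 \<noteq> 0, triangularising M in a basis that starts with w
  splits off the factor X - l of the characteristic polynomial; hence l is simple iff
  (M - l) x \<in> span w forces x \<in> span w. A left eigenvector z with z \<bullet> w \<noteq> 0 rules out Jordan
  chains through w, so this reduces to the eigenspace being the line through w. An eigenvector of B
  is constant on its first k coordinates (row p < k of B x = l x says x_p equals the next coordinate)
  and its last n coordinates form an eigenvector of A; thus l is a simple eigenvalue of B, with the
  positive eigenvectors w and z. Finally, if char_poly M = (X - l) g, Cayley--Hamilton makes every
  row of g(M) a left eigenvector, so g(M) = g(l) w z^T / (z \<bullet> w) is a positive matrix up to the
  nonzero factor g(l).\<close>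

section \<open>Algebraic and geometric simplicity\<close>

definition eigenspace_line :: "'a::field mat \<Rightarrow> nat \<Rightarrow> 'a \<Rightarrow> 'a vec \<Rightarrow> bool" where
  "eigenspace_line M n l w \<longleftrightarrow> (\<forall>x \<in> carrier_vec n. M *\<^sub>v x = l \<cdot>\<^sub>v x \<longrightarrow> (\<exists>d. x = d \<cdot>\<^sub>v w))"

definition gen_eigenspace_line :: "'a::field mat \<Rightarrow> nat \<Rightarrow> 'a \<Rightarrow> 'a vec \<Rightarrow> bool" where
  "gen_eigenspace_line M n l w \<longleftrightarrow>
     (\<forall>x \<in> carrier_vec n. \<forall>c. M *\<^sub>v x = l \<cdot>\<^sub>v x + c \<cdot>\<^sub>v w \<longrightarrow> (\<exists>d. x = d \<cdot>\<^sub>v w))"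

lemma gen_eigenspace_line_similar:
  fixes M :: "'a::field mat"
  assumes M: "M \<in> carrier_mat n n" and P: "P \<in> carrier_mat n n" and Q: "Q \<in> carrier_mat n n"
    and PQ: "P * Q = 1\<^sub>m n" and QP: "Q * P = 1\<^sub>m n" and w: "w \<in> carrier_vec n"
    and line: "gen_eigenspace_line M n l w"
  shows "gen_eigenspace_line (Q * M * P) n l (Q *\<^sub>v w)"
  unfolding gen_eigenspace_line_def
proof (intro ballI allI impI)
  fix x c assume x: "x \<in> carrier_vec n" and eq: "Q * M * P *\<^sub>v x = l \<cdot>\<^sub>v x + c \<cdot>\<^sub>v (Q *\<^sub>v w)"
  have "M *\<^sub>v (P *\<^sub>v x) = (P * Q) *\<^sub>v (M *\<^sub>v (P *\<^sub>v x))"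
    using M P x by (simp add: PQ)
  also have "\<dots> = P *\<^sub>v (Q * M * P *\<^sub>v x)"
    using M P Q x by (simp add: assoc_mult_mat_vec[of _ n n _ n])
  also have "\<dots> = l \<cdot>\<^sub>v (P *\<^sub>v x) + c \<cdot>\<^sub>v ((P * Q) *\<^sub>v w)"
    unfolding eq using P Q x w by (simp add: mult_add_distrib_mat_vec mult_mat_vec)
  finally obtain d where "P *\<^sub>v x = d \<cdot>\<^sub>v w"
    using line P x w unfolding gen_eigenspace_line_def PQ by fastforce
  then have "(Q * P) *\<^sub>v x = d \<cdot>\<^sub>v (Q *\<^sub>v w)"
    using P Q x w by (simp add: mult_mat_vec)
  then show "\<exists>d. x = d \<cdot>\<^sub>v (Q *\<^sub>v w)"
    using x by (auto simp: QP)
qed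

lemma gen_eigenspace_line_similar_iff:
  fixes M :: "'a::field mat"
  assumes M: "M \<in> carrier_mat n n" and P: "P \<in> carrier_mat n n" and Q: "Q \<in> carrier_mat n n"
    and PQ: "P * Q = 1\<^sub>m n" and QP: "Q * P = 1\<^sub>m n" and w: "w \<in> carrier_vec n"
  shows "gen_eigenspace_line (Q * M * P) n l (Q *\<^sub>v w) \<longleftrightarrow> gen_eigenspace_line M n l w"
proof
  have "P * (Q * M * P) * Q = (P * Q) * M * (P * Q)"
    using M P Q by (simp add: assoc_mult_mat[of _ n n _ n _ n])
  then have "P * (Q * M * P) * Q = M"
    using M by (simp add: PQ)
  moreover have "P *\<^sub>v (Q *\<^sub>v w) = w"
    using P Q w by (simp flip: assoc_mult_mat_vec[OF P Q w] add: PQ)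
  moreover assume "gen_eigenspace_line (Q * M * P) n l (Q *\<^sub>v w)"
  ultimately show "gen_eigenspace_line M n l w"
    using gen_eigenspace_line_similar[of "Q * M * P" n Q P "Q *\<^sub>v w" l] M P Q w PQ QP by auto
qed (rule gen_eigenspace_line_similar[OF assms])

lemma mult_vec_block_eigencolumn:
  fixes C2 C4 :: "'a::field mat"
  assumes C2: "C2 \<in> carrier_mat 1 m" and C4: "C4 \<in> carrier_mat m m"
    and a: "a \<in> carrier_vec 1" and y: "y \<in> carrier_vec m"
  shows "four_block_mat (mat 1 1 (\<lambda>_. l)) C2 (0\<^sub>m m 1) C4 *\<^sub>v (a @\<^sub>v y) = (l \<cdot>\<^sub>v a + C2 *\<^sub>v y) @\<^sub>v (C4 *\<^sub>v y)"
proof -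
  have "mat 1 1 (\<lambda>_. l) *\<^sub>v a = l \<cdot>\<^sub>v a"
    using a by (intro eq_vecI) (auto simp: scalar_prod_def)
  moreover have "0\<^sub>m m 1 *\<^sub>v a + C4 *\<^sub>v y = C4 *\<^sub>v y"
    using a C4 by (intro eq_vecI) auto
  ultimately show ?thesis
    using four_block_mat_mult_vec[OF _ C2 zero_carrier_mat C4 a y] by simp
qed

lemma gen_eigenspace_line_block_imp_not_eigenvalue:
  fixes C2 C4 :: "'a::field mat"
  assumes C2: "C2 \<in> carrier_mat 1 m" and C4: "C4 \<in> carrier_mat m m"
    and line: "gen_eigenspace_line (four_block_mat (mat 1 1 (\<lambda>_. l)) C2 (0\<^sub>m m 1) C4) (Suc m) l (unit_vec (Suc m) 0)"
  shows "\<not> eigenvalue C4 l"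
proof
  let ?C = "four_block_mat (mat 1 1 (\<lambda>_. l)) C2 (0\<^sub>m m 1) C4" and ?e = "unit_vec (Suc m) 0"
  assume "eigenvalue C4 l"
  then obtain y where y: "y \<in> carrier_vec m" "y \<noteq> 0\<^sub>v m" "C4 *\<^sub>v y = l \<cdot>\<^sub>v y"
    using C4 unfolding eigenvalue_def eigenvector_def by auto
  define c where "c = (C2 *\<^sub>v y) $ 0"
  have x: "0\<^sub>v 1 @\<^sub>v y \<in> carrier_vec (Suc m)"
    using append_carrier_vec[OF zero_carrier_vec[of 1] y(1)] by simp
  have "?C *\<^sub>v (0\<^sub>v 1 @\<^sub>v y) = l \<cdot>\<^sub>v (0\<^sub>v 1 @\<^sub>v y) + c \<cdot>\<^sub>v ?e"
    unfolding mult_vec_block_eigencolumn[OF C2 C4 zero_carrier_vec y(1)] using y C2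
    by (intro eq_vecI) (auto simp: c_def)
  then obtain d where d: "0\<^sub>v 1 @\<^sub>v y = d \<cdot>\<^sub>v ?e"
    using line x unfolding gen_eigenspace_line_def by blast
  have "y $ i = 0" if "i < m" for i
  proof -
    have "(0\<^sub>v 1 @\<^sub>v y) $ Suc i = (d \<cdot>\<^sub>v ?e) $ Suc i"
      by (simp only: d)
    then show ?thesis
      using that y(1) by simp
  qed
  then have "y = 0\<^sub>v m"
    using y(1) by (intro eq_vecI) auto
  with y(2) show False ..
qed

lemma not_eigenvalue_imp_gen_eigenspace_line_block:
  fixes C2 C4 :: "'a::field mat"
  assumes C2: "C2 \<in> carrier_mat 1 m" and C4: "C4 \<in> carrier_mat m m" and no_ev: "\<not> eigenvalue C4 l"
  shows "gen_eigenspace_line (four_block_mat (mat 1 1 (\<lambda>_. l)) C2 (0\<^sub>m m 1) C4) (Suc m) l (unit_vec (Suc m) 0)"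
  unfolding gen_eigenspace_line_def
proof (intro ballI allI impI)
  let ?C = "four_block_mat (mat 1 1 (\<lambda>_. l)) C2 (0\<^sub>m m 1) C4" and ?e = "unit_vec (Suc m) 0"
  fix x c assume x: "x \<in> carrier_vec (Suc m)" and eq: "?C *\<^sub>v x = l \<cdot>\<^sub>v x + c \<cdot>\<^sub>v ?e"
  define y where "y = vec_last x m"
  have "?C *\<^sub>v (vec_first x 1 @\<^sub>v y) = (l \<cdot>\<^sub>v vec_first x 1 + C2 *\<^sub>v y) @\<^sub>v (C4 *\<^sub>v y)"
    by (rule mult_vec_block_eigencolumn[OF C2 C4]) (simp_all add: y_def)
  then have Cx: "?C *\<^sub>v x = (l \<cdot>\<^sub>v vec_first x 1 + C2 *\<^sub>v y) @\<^sub>v (C4 *\<^sub>v y)"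
    using x by (simp add: y_def)
  have "(C4 *\<^sub>v y) $ i = (l \<cdot>\<^sub>v y) $ i" if "i < m" for i
  proof -
    have "(C4 *\<^sub>v y) $ i = (?C *\<^sub>v x) $ Suc i"
      unfolding Cx using C2 C4 that by (simp del: index_mult_mat_vec)
    also have "\<dots> = (l \<cdot>\<^sub>v x + c \<cdot>\<^sub>v ?e) $ Suc i"
      by (simp only: eq)
    also have "\<dots> = (l \<cdot>\<^sub>v y) $ i"
      using x that by (simp add: y_def vec_last_def)
    finally show ?thesis .
  qed
  then have "C4 *\<^sub>v y = l \<cdot>\<^sub>v y"
    using C4 by (intro eq_vecI) (auto simp: y_def)
  then have "y = 0\<^sub>v m"
    using no_ev C4 unfolding eigenvalue_def eigenvector_def y_def by (metis carrier_matD(1) vec_last_carrier)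
  have last: "x $ Suc i = 0" if "i < m" for i
  proof -
    have "x $ Suc i = y $ i"
      using x that by (simp add: y_def vec_last_def)
    then show ?thesis
      using \<open>y = 0\<^sub>v m\<close> that by simp
  qed
  have "x = (x $ 0) \<cdot>\<^sub>v ?e"
  proof (rule eq_vecI)
    fix i assume "i < dim_vec ((x $ 0) \<cdot>\<^sub>v ?e)"
    then show "x $ i = ((x $ 0) \<cdot>\<^sub>v ?e) $ i"
      using last by (cases i) auto
  qed (use x in simp)
  then show "\<exists>d. x = d \<cdot>\<^sub>v ?e" ..
qed

lemma gen_eigenspace_line_block_iff:
  fixes C2 C4 :: "'a::field mat"
  assumes "C2 \<in> carrier_mat 1 m" and "C4 \<in> carrier_mat m m"
  shows "gen_eigenspace_line (four_block_mat (mat 1 1 (\<lambda>_. l)) C2 (0\<^sub>m m 1) C4) (Suc m) l (unit_vec (Suc m) 0)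
    \<longleftrightarrow> \<not> eigenvalue C4 l"
  using gen_eigenspace_line_block_imp_not_eigenvalue[OF assms] not_eigenvalue_imp_gen_eigenspace_line_block[OF assms]
  by blast

lemma basis_change_to_unit_vec:
  fixes w :: "'a::field vec"
  assumes w: "w \<in> carrier_vec (Suc m)" "w $ 0 \<noteq> 0"
  obtains P Q where "P \<in> carrier_mat (Suc m) (Suc m)" "Q \<in> carrier_mat (Suc m) (Suc m)"
    "P * Q = 1\<^sub>m (Suc m)" "Q * P = 1\<^sub>m (Suc m)" "P *\<^sub>v unit_vec (Suc m) 0 = w" "Q *\<^sub>v w = unit_vec (Suc m) 0"
proof -
  let ?n = "Suc m" and ?e = "unit_vec (Suc m) 0"
  define P where "P = mat ?n ?n (\<lambda>(i,j). if j = 0 then w $ i else if i = j then 1 else 0)"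
  have P: "P \<in> carrier_mat ?n ?n"
    by (simp add: P_def)
  have "det P = prod_list (diag_mat P)"
    by (rule det_lower_triangular[OF _ P]) (auto simp: P_def)
  also have "\<dots> = (\<Prod>i<Suc m. P $$ (i, i))"
    using P by (simp add: diag_mat_def prod.distinct_set_conv_list[symmetric] atLeast0LessThan
        del: upt_Suc prod.lessThan_Suc)
  also have "\<dots> = w $ 0"
    unfolding prod.lessThan_Suc_shift by (auto simp: P_def intro!: prod.neutral)
  finally have "det P \<noteq> 0"
    using w by simp
  then obtain Q where Q: "Q \<in> carrier_mat ?n ?n" and QP: "Q * P = 1\<^sub>m ?n" and PQ: "P * Q = 1\<^sub>m ?n"
    using det_non_zero_imp_unit[OF P, unfolded Units_def, of "()"] by (auto simp: ring_mat_def)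
  have Pe: "P *\<^sub>v ?e = w"
    using w by (intro eq_vecI) (auto simp: P_def)
  have "Q *\<^sub>v w = (Q * P) *\<^sub>v ?e"
    using P Q by (simp flip: Pe)
  then have "Q *\<^sub>v w = ?e"
    by (simp add: QP)
  with P Q PQ QP Pe show thesis
    using that by blast
qed

lemma eigenvector_block_triangularization:
  fixes M :: "'a::field mat"
  assumes M: "M \<in> carrier_mat (Suc m) (Suc m)" and w: "w \<in> carrier_vec (Suc m)" "w $ 0 \<noteq> 0"
    and ev: "M *\<^sub>v w = l \<cdot>\<^sub>v w"
  obtains P Q C2 C4 where "P \<in> carrier_mat (Suc m) (Suc m)" "Q \<in> carrier_mat (Suc m) (Suc m)"
    "P * Q = 1\<^sub>m (Suc m)" "Q * P = 1\<^sub>m (Suc m)" "Q *\<^sub>v w = unit_vec (Suc m) 0"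
    "C2 \<in> carrier_mat 1 m" "C4 \<in> carrier_mat m m"
    "Q * M * P = four_block_mat (mat 1 1 (\<lambda>_. l)) C2 (0\<^sub>m m 1) C4"
proof -
  let ?n = "Suc m" and ?e = "unit_vec (Suc m) 0"
  obtain P Q where P: "P \<in> carrier_mat ?n ?n" and Q: "Q \<in> carrier_mat ?n ?n"
    and PQ: "P * Q = 1\<^sub>m ?n" and QP: "Q * P = 1\<^sub>m ?n" and Pe: "P *\<^sub>v ?e = w" and Qw: "Q *\<^sub>v w = ?e"
    using basis_change_to_unit_vec[OF w] .
  define C where "C = Q * M * P"
  have C: "C \<in> carrier_mat ?n ?n"
    using Q M P by (simp add: C_def)
  have "C *\<^sub>v ?e = Q *\<^sub>v (M *\<^sub>v (P *\<^sub>v ?e))"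
    unfolding C_def using Q M P
    by (simp add: assoc_mult_mat_vec[OF mult_carrier_mat[OF Q M] P] assoc_mult_mat_vec[OF Q M]
        del: assoc_mult_mat)
  also have "\<dots> = l \<cdot>\<^sub>v ?e"
    using Q w by (simp add: Pe ev mult_mat_vec Qw)
  finally have Ce: "C *\<^sub>v ?e = l \<cdot>\<^sub>v ?e" .
  have first_col: "C $$ (i, 0) = (if i = 0 then l else 0)" if "i < ?n" for i
    using arg_cong[OF Ce, of "\<lambda>x. x $ i"] that C by simp
  define C2 where "C2 = mat 1 m (\<lambda>(_, j). C $$ (0, Suc j))"
  define C4 where "C4 = mat m m (\<lambda>(i, j). C $$ (Suc i, Suc j))"
  have block: "C = four_block_mat (mat 1 1 (\<lambda>_. l)) C2 (0\<^sub>m m 1) C4"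
  proof (rule eq_matI)
    fix i j assume "i < dim_row (four_block_mat (mat 1 1 (\<lambda>_. l)) C2 (0\<^sub>m m 1) C4)"
      and "j < dim_col (four_block_mat (mat 1 1 (\<lambda>_. l)) C2 (0\<^sub>m m 1) C4)"
    then have "i < ?n" "j < ?n"
      by (auto simp: C2_def C4_def)
    then show "C $$ (i, j) = four_block_mat (mat 1 1 (\<lambda>_. l)) C2 (0\<^sub>m m 1) C4 $$ (i, j)"
      using first_col by (cases i; cases j) (auto simp: C2_def C4_def)
  qed (use C in \<open>auto simp: C2_def C4_def\<close>)
  show thesis
    by (rule that[OF P Q PQ QP Qw _ _ block[unfolded C_def]]) (simp_all add: C2_def C4_def)
qed

lemma order_char_poly_eq_1_iff_gen_eigenspace_line:
  fixes M :: "'a::field mat"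
  assumes M: "M \<in> carrier_mat (Suc m) (Suc m)" and w: "w \<in> carrier_vec (Suc m)" "w $ 0 \<noteq> 0"
    and ev: "M *\<^sub>v w = l \<cdot>\<^sub>v w"
  shows "order l (char_poly M) = 1 \<longleftrightarrow> gen_eigenspace_line M (Suc m) l w"
proof -
  obtain P Q C2 C4 where P: "P \<in> carrier_mat (Suc m) (Suc m)" and Q: "Q \<in> carrier_mat (Suc m) (Suc m)"
    and PQ: "P * Q = 1\<^sub>m (Suc m)" and QP: "Q * P = 1\<^sub>m (Suc m)" and Qw: "Q *\<^sub>v w = unit_vec (Suc m) 0"
    and C2: "C2 \<in> carrier_mat 1 m" and C4: "C4 \<in> carrier_mat m m"
    and C: "Q * M * P = four_block_mat (mat 1 1 (\<lambda>_. l)) C2 (0\<^sub>m m 1) C4"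
    using eigenvector_block_triangularization[OF M w ev] .
  have "P * (Q * M * P) * Q = (P * Q) * M * (P * Q)"
    using M P Q by (simp add: assoc_mult_mat[of _ "Suc m" "Suc m" _ "Suc m" _ "Suc m"])
  then have "similar_mat_wit M (Q * M * P) P Q"
    using M P Q by (intro similar_mat_witI[OF PQ QP]) (auto simp: PQ)
  then have "similar_mat M (Q * M * P)"
    unfolding similar_mat_def by blast
  then have "char_poly M = char_poly (Q * M * P)"
    by (rule char_poly_similar)
  also have "\<dots> = char_poly (mat 1 1 (\<lambda>_. l)) * char_poly C4"
    unfolding C by (rule char_poly_four_block_zeros_col[OF _ C2 C4]) simp
  also have "char_poly (mat 1 1 (\<lambda>_. l)) = [:-l, 1:]"
    by (subst char_poly_upper_triangular[of _ 1]) (auto simp: upper_triangular_def diag_mat_def)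
  finally have cp: "char_poly M = [:-l, 1:] * char_poly C4" .
  have "char_poly C4 \<noteq> 0"
    using degree_monic_char_poly[OF C4] by auto
  then have "[:-l, 1:] * char_poly C4 \<noteq> 0"
    by (intro no_zero_divisors) simp_all
  then have "order l (char_poly M) = 1 + order l (char_poly C4)"
    unfolding cp order_mult[OF \<open>[:-l, 1:] * char_poly C4 \<noteq> 0\<close>] using order_power_n_n[of l 1] by simp
  also have "\<dots> = 1 \<longleftrightarrow> \<not> eigenvalue C4 l"
    using eigenvalue_root_char_poly[OF C4] order_root[of "char_poly C4" l] \<open>char_poly C4 \<noteq> 0\<close> by auto
  also have "\<dots> \<longleftrightarrow> gen_eigenspace_line M (Suc m) l w"
    using gen_eigenspace_line_block_iff[OF C2 C4, of l] gen_eigenspace_line_similar_iff[OF M P Q PQ QP w(1), of l]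
    by (simp add: C Qw)
  finally show ?thesis .
qed

lemma gen_eigenspace_line_iff_eigenspace_line:
  fixes M :: "'a::field mat"
  assumes M: "M \<in> carrier_mat n n" and w: "w \<in> carrier_vec n" and z: "z \<in> carrier_vec n"
    and Mz: "transpose_mat M *\<^sub>v z = l \<cdot>\<^sub>v z" and zw: "z \<bullet> w \<noteq> 0"
  shows "gen_eigenspace_line M n l w \<longleftrightarrow> eigenspace_line M n l w"
proof
  assume gen: "gen_eigenspace_line M n l w"
  show "eigenspace_line M n l w"
    unfolding eigenspace_line_def
  proof (intro ballI impI)
    fix x assume x: "x \<in> carrier_vec n" and "M *\<^sub>v x = l \<cdot>\<^sub>v x"
    then have "M *\<^sub>v x = l \<cdot>\<^sub>v x + 0 \<cdot>\<^sub>v w"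
      using w by auto
    then show "\<exists>d. x = d \<cdot>\<^sub>v w"
      using gen x unfolding gen_eigenspace_line_def by blast
  qed
next
  assume line: "eigenspace_line M n l w"
  show "gen_eigenspace_line M n l w"
    unfolding gen_eigenspace_line_def
  proof (intro ballI allI impI)
    fix x c assume x: "x \<in> carrier_vec n" and eq: "M *\<^sub>v x = l \<cdot>\<^sub>v x + c \<cdot>\<^sub>v w"
    have "l * (z \<bullet> x) = (transpose_mat M *\<^sub>v z) \<bullet> x"
      using x z by (simp add: Mz)
    also have "\<dots> = z \<bullet> (M *\<^sub>v x)"
      by (rule transpose_vec_mult_scalar[OF M x z])
    also have "\<dots> = l * (z \<bullet> x) + c * (z \<bullet> w)"
      unfolding eq using x z w by (simp add: scalar_prod_add_distrib[of _ n])
    finally have "c = 0"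
      using zw by simp
    moreover have "0 \<cdot>\<^sub>v w = 0\<^sub>v n"
      using w by (intro eq_vecI) auto
    ultimately have "M *\<^sub>v x = l \<cdot>\<^sub>v x"
      using eq x by simp
    then show "\<exists>d. x = d \<cdot>\<^sub>v w"
      using line x unfolding eigenspace_line_def by blast
  qed
qed

lemma simple_eigenvalue_iff_eigenspace_line:
  fixes M :: "real mat"
  assumes M: "M \<in> carrier_mat n n" and n: "0 < n"
    and w: "w \<in> carrier_vec n" "w $ 0 \<noteq> 0" and z: "z \<in> carrier_vec n"
    and Mw: "M *\<^sub>v w = l \<cdot>\<^sub>v w" and Mz: "transpose_mat M *\<^sub>v z = l \<cdot>\<^sub>v z" and zw: "z \<bullet> w \<noteq> 0"
  shows "simple_eigenvalue M l \<longleftrightarrow> eigenspace_line M n l w"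
proof -
  obtain m where m: "n = Suc m"
    using n by (cases n) auto
  show ?thesis
    unfolding simple_eigenvalue_def
    using order_char_poly_eq_1_iff_gen_eigenspace_line[of M m w l]
      gen_eigenspace_line_iff_eigenspace_line[OF M w(1) z Mz zw] M w Mw m by simp
qed

section \<open>Cayley--Hamilton and algebraic positivity\<close>

lemma index_mult_mat_sum:
  assumes "A \<in> carrier_mat nr n" "B \<in> carrier_mat n nc" "i < nr" "j < nc"
  shows "(A * B) $$ (i, j) = (\<Sum>k<n. A $$ (i, k) * B $$ (k, j))"
  using assms by (simp add: scalar_prod_def atLeast0LessThan)

lemma dim_mat_poly_eval [simp]:
  "dim_row (mat_poly_eval f M) = dim_row M" "dim_col (mat_poly_eval f M) = dim_col M"
  by (simp_all add: mat_poly_eval_def)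

lemma mat_poly_eval_carrier:
  "M \<in> carrier_mat n n \<Longrightarrow> mat_poly_eval f M \<in> carrier_mat n n"
  by (simp add: mat_poly_eval_def)

lemma index_mat_poly_eval:
  assumes M: "M \<in> carrier_mat n n" and "p < n" "q < n" and "degree f \<le> N"
  shows "mat_poly_eval f M $$ (p, q) = (\<Sum>i\<le>N. coeff f i * (M ^\<^sub>m i) $$ (p, q))"
proof -
  have "(\<Sum>i\<le>degree f. coeff f i * (M ^\<^sub>m i) $$ (p, q)) = (\<Sum>i\<le>N. coeff f i * (M ^\<^sub>m i) $$ (p, q))"
    using \<open>degree f \<le> N\<close> by (intro sum.mono_neutral_left) (auto simp: coeff_eq_0)
  then show ?thesis
    using assms by (simp add: mat_poly_eval_def)
qed

lemma mat_poly_eval_smult: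
  assumes M: "M \<in> carrier_mat n n"
  shows "mat_poly_eval (Polynomial.smult c f) M = c \<cdot>\<^sub>m mat_poly_eval f M"
proof (rule eq_matI)
  fix p q assume "p < dim_row (c \<cdot>\<^sub>m mat_poly_eval f M)" "q < dim_col (c \<cdot>\<^sub>m mat_poly_eval f M)"
  then have pq: "p < n" "q < n"
    using M by (auto simp: mat_poly_eval_def)
  have "mat_poly_eval (Polynomial.smult c f) M $$ (p, q)
      = (\<Sum>i\<le>degree f. coeff (Polynomial.smult c f) i * (M ^\<^sub>m i) $$ (p, q))"
    by (rule index_mat_poly_eval[OF M pq degree_smult_le])
  also have "\<dots> = c * mat_poly_eval f M $$ (p, q)"
    by (simp add: index_mat_poly_eval[OF M pq order.refl] sum_distrib_left mult.assoc)
  finally show "mat_poly_eval (Polynomial.smult c f) M $$ (p, q) = (c \<cdot>\<^sub>m mat_poly_eval f M) $$ (p, q)"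
    using M pq by simp
qed (use M in \<open>auto simp: mat_poly_eval_def\<close>)

lemma mat_poly_eval_linear_factor:
  assumes M: "M \<in> carrier_mat n n"
  shows "mat_poly_eval ([:-l, 1:] * g) M = mat_poly_eval g M * M - l \<cdot>\<^sub>m mat_poly_eval g M"
    (is "_ = ?G * M - _")
proof (rule eq_matI)
  fix p q assume "p < dim_row (?G * M - l \<cdot>\<^sub>m ?G)" "q < dim_col (?G * M - l \<cdot>\<^sub>m ?G)"
  then have pq: "p < n" "q < n"
    using M by (auto simp: mat_poly_eval_def)
  let ?X = "\<lambda>i. (M ^\<^sub>m i) $$ (p, q)"
  have coeff: "coeff ([:-l, 1:] * g) i = (case i of 0 \<Rightarrow> 0 | Suc i' \<Rightarrow> coeff g i') - l * coeff g i" for i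
    by (cases i) (simp_all add: mult_pCons_left)
  have deg: "degree ([:-l, 1:] * g) \<le> Suc (degree g)"
    using degree_mult_le[of "[:-l, 1:]" g] by simp
  have "mat_poly_eval ([:-l, 1:] * g) M $$ (p, q) = (\<Sum>i\<le>Suc (degree g). coeff ([:-l, 1:] * g) i * ?X i)"
    by (rule index_mat_poly_eval[OF M pq deg])
  also have "\<dots> = (\<Sum>i\<le>Suc (degree g). (case i of 0 \<Rightarrow> 0 | Suc i' \<Rightarrow> coeff g i') * ?X i)
      - l * (\<Sum>i\<le>Suc (degree g). coeff g i * ?X i)"
    unfolding coeff left_diff_distrib sum_subtractf by (simp only: sum_distrib_left mult.assoc)
  also have "(\<Sum>i\<le>Suc (degree g). (case i of 0 \<Rightarrow> 0 | Suc i' \<Rightarrow> coeff g i') * ?X i)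
      = (\<Sum>i\<le>degree g. coeff g i * ?X (Suc i))"
    by (subst sum.atMost_Suc_shift) simp
  also have "(\<Sum>i\<le>degree g. coeff g i * ?X (Suc i))
      = (\<Sum>c<n. \<Sum>i\<le>degree g. coeff g i * (M ^\<^sub>m i) $$ (p, c) * M $$ (c, q))"
    using M pq by (simp add: index_mult_mat_sum[of _ n n] sum_distrib_left mult.assoc sum.swap[of _ _ "{..<n}"]
        del: index_mult_mat)
  also have "\<dots> = (\<Sum>c<n. ?G $$ (p, c) * M $$ (c, q))"
    by (rule sum.cong[OF refl]) (simp add: index_mat_poly_eval[OF M pq(1) _ order.refl] sum_distrib_right)
  also have "\<dots> = (?G * M) $$ (p, q)"
    using M pq by (simp add: index_mult_mat_sum[OF mat_poly_eval_carrier[OF M] M pq] del: index_mult_mat)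
  also have "(\<Sum>i\<le>Suc (degree g). coeff g i * ?X i) = ?G $$ (p, q)"
    by (rule index_mat_poly_eval[OF M pq, symmetric]) simp
  finally show "mat_poly_eval ([:-l, 1:] * g) M $$ (p, q) = (?G * M - l \<cdot>\<^sub>m ?G) $$ (p, q)"
    using M pq by (simp add: mat_poly_eval_carrier)
qed (use M in \<open>auto simp: mat_poly_eval_def\<close>)

lemma mat_poly_eval_mult_eigenvector:
  assumes M: "M \<in> carrier_mat n n" and w: "w \<in> carrier_vec n" and Mw: "M *\<^sub>v w = l \<cdot>\<^sub>v w"
  shows "mat_poly_eval f M *\<^sub>v w = poly f l \<cdot>\<^sub>v w"
proof (rule eq_vecI)
  have pow: "M ^\<^sub>m i *\<^sub>v w = l ^ i \<cdot>\<^sub>v w" for i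
  proof (cases "w = 0\<^sub>v n")
    case False
    then show ?thesis
      using eigenvector_pow[OF M] M w Mw by (simp add: eigenvector_def)
  qed (use M in \<open>auto intro!: eq_vecI\<close>)
  fix p assume "p < dim_vec (poly f l \<cdot>\<^sub>v w)"
  then have p: "p < n"
    using w by simp
  have "(mat_poly_eval f M *\<^sub>v w) $ p = (\<Sum>q<n. \<Sum>i\<le>degree f. coeff f i * ((M ^\<^sub>m i) $$ (p, q) * w $ q))"
    using M w p by (simp add: mat_poly_eval_def scalar_prod_def atLeast0LessThan sum_distrib_right mult.assoc)
  also have "\<dots> = (\<Sum>i\<le>degree f. coeff f i * (M ^\<^sub>m i *\<^sub>v w) $ p)"
    using M w p by (subst sum.swap) (simp add: scalar_prod_def atLeast0LessThan sum_distrib_left)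
  also have "\<dots> = poly f l * w $ p"
    using w p by (simp add: pow poly_altdef sum_distrib_right mult.assoc)
  finally show "(mat_poly_eval f M *\<^sub>v w) $ p = (poly f l \<cdot>\<^sub>v w) $ p"
    using p w by simp
qed (use M w in \<open>simp add: mat_poly_eval_def\<close>)

lemma coeff_char_poly_adj_mat_identity:
  fixes M :: "'a::comm_ring_1 mat"
  assumes M: "M \<in> carrier_mat n n" and a: "a < n" and b: "b < n"
  defines "Ad \<equiv> adj_mat (char_poly_matrix M)"
  shows "coeff (char_poly M) i * (if a = b then 1 else 0) =
     (if i = 0 then 0 else coeff (Ad $$ (a, b)) (i - 1)) - (\<Sum>c<n. M $$ (a, c) * coeff (Ad $$ (c, b)) i)"
proof -
  let ?N = "char_poly_matrix M"
  have N: "?N \<in> carrier_mat n n"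
    using M by simp
  have Ad: "Ad \<in> carrier_mat n n"
    unfolding Ad_def using adj_mat(1)[OF N] .
  have "(\<Sum>c<n. ?N $$ (a, c) * Ad $$ (c, b)) = (?N * Ad) $$ (a, b)"
    using index_mult_mat_sum[OF N Ad a b] by simp
  also have "\<dots> = (char_poly M \<cdot>\<^sub>m 1\<^sub>m n) $$ (a, b)"
    unfolding Ad_def adj_mat(2)[OF N] char_poly_def ..
  finally have adj: "(\<Sum>c<n. ?N $$ (a, c) * Ad $$ (c, b)) = (if a = b then char_poly M else 0)"
    using a b by simp
  have "(\<Sum>c<n. ?N $$ (a, c) * Ad $$ (c, b))
      = (\<Sum>c<n. (if a = c then pCons 0 (Ad $$ (c, b)) else 0) - Polynomial.smult (M $$ (a, c)) (Ad $$ (c, b)))"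
    by (rule sum.cong) (use M a in \<open>auto simp: char_poly_matrix_def algebra_simps\<close>)
  also have "\<dots> = pCons 0 (Ad $$ (a, b)) - (\<Sum>c<n. Polynomial.smult (M $$ (a, c)) (Ad $$ (c, b)))"
    using a by (simp add: sum_subtractf)
  finally have "coeff (if a = b then char_poly M else 0) i
      = coeff (pCons 0 (Ad $$ (a, b)) - (\<Sum>c<n. Polynomial.smult (M $$ (a, c)) (Ad $$ (c, b)))) i"
    by (simp only: adj)
  then show ?thesis
    by (cases i) (auto simp: coeff_sum)
qed

lemma coeff_char_poly_telescope:
  fixes M :: "'a::comm_ring_1 mat"
  assumes M: "M \<in> carrier_mat n n" and a: "a < n" and b: "b < n"
  defines "Ad \<equiv> adj_mat (char_poly_matrix M)"
  shows "coeff (char_poly M) i * (M ^\<^sub>m i) $$ (a, b)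
    = (\<Sum>c<n. (M ^\<^sub>m i) $$ (a, c) * (if i = 0 then 0 else coeff (Ad $$ (c, b)) (i - 1)))
      - (\<Sum>c<n. (M ^\<^sub>m Suc i) $$ (a, c) * coeff (Ad $$ (c, b)) i)"
proof -
  have pow_Suc: "(\<Sum>c<n. (M ^\<^sub>m Suc i) $$ (a, c) * coeff (Ad $$ (c, b)) i)
      = (\<Sum>d<n. (\<Sum>c<n. (M ^\<^sub>m i) $$ (a, c) * M $$ (c, d)) * coeff (Ad $$ (d, b)) i)"
    using M a by (intro sum.cong) (simp_all add: index_mult_mat_sum[of _ n n] del: index_mult_mat)
  have "coeff (char_poly M) i * (M ^\<^sub>m i) $$ (a, b)
      = (\<Sum>c<n. (M ^\<^sub>m i) $$ (a, c) * (coeff (char_poly M) i * (if c = b then 1 else 0)))"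
    using b by (simp add: if_distrib sum.If_cases mult.commute)
  also have "\<dots> = (\<Sum>c<n. (M ^\<^sub>m i) $$ (a, c) * ((if i = 0 then 0 else coeff (Ad $$ (c, b)) (i - 1))
      - (\<Sum>d<n. M $$ (c, d) * coeff (Ad $$ (d, b)) i)))"
    by (rule sum.cong[OF refl]) (use coeff_char_poly_adj_mat_identity[OF M _ b, of _ i] in \<open>simp add: Ad_def\<close>)
  also have "\<dots> = (\<Sum>c<n. (M ^\<^sub>m i) $$ (a, c) * (if i = 0 then 0 else coeff (Ad $$ (c, b)) (i - 1)))
      - (\<Sum>d<n. (\<Sum>c<n. (M ^\<^sub>m i) $$ (a, c) * M $$ (c, d)) * coeff (Ad $$ (d, b)) i)"
    unfolding right_diff_distrib sum_subtractf sum_distrib_left sum_distrib_right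
    by (subst (2) sum.swap) (simp add: mult.assoc)
  finally show ?thesis
    by (simp only: pow_Suc)
qed

text \<open>Cayley--Hamilton: multiplied by the powers of M, the coefficient identities of
  (X 1 - M) adj(X 1 - M) = char_poly M 1 telescope.\<close>
theorem mat_poly_eval_char_poly:
  fixes M :: "real mat"
  assumes M: "M \<in> carrier_mat n n"
  shows "mat_poly_eval (char_poly M) M = 0\<^sub>m n n"
proof (rule eq_matI)
  fix a b assume "a < dim_row (0\<^sub>m n n :: real mat)" "b < dim_col (0\<^sub>m n n :: real mat)"
  then have a: "a < n" and b: "b < n"
    by simp_all
  define Ad where "Ad = adj_mat (char_poly_matrix M)"
  define p where "p = char_poly M"
  define K where "K = Suc (degree p + (\<Sum>c<n. \<Sum>d<n. degree (Ad $$ (c, d))))"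
  have deg_Ad: "degree (Ad $$ (c, d)) < K" if "c < n" "d < n" for c d
  proof -
    have "degree (Ad $$ (c, d)) \<le> (\<Sum>d'<n. degree (Ad $$ (c, d')))"
      by (rule member_le_sum) (use that in auto)
    also have "\<dots> \<le> (\<Sum>c'<n. \<Sum>d'<n. degree (Ad $$ (c', d')))"
      by (rule member_le_sum[of c "{..<n}" "\<lambda>c'. \<Sum>d'<n. degree (Ad $$ (c', d'))"]) (use that in auto)
    finally show ?thesis
      unfolding K_def by simp
  qed
  define T where "T i = (\<Sum>c<n. (M ^\<^sub>m i) $$ (a, c) * (if i = 0 then 0 else coeff (Ad $$ (c, b)) (i - 1)))" for i
  have "mat_poly_eval p M $$ (a, b) = (\<Sum>i\<le>K. coeff p i * (M ^\<^sub>m i) $$ (a, b))"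
    by (rule index_mat_poly_eval[OF M a b]) (simp add: K_def)
  also have "\<dots> = (\<Sum>i\<le>K. T i - T (Suc i))"
    using coeff_char_poly_telescope[OF M a b] unfolding T_def Ad_def p_def by simp
  also have "\<dots> = T 0 - T (Suc K)"
    by (rule sum_telescope)
  also have "\<dots> = 0"
    unfolding T_def using deg_Ad b by (simp add: coeff_eq_0)
  finally show "mat_poly_eval (char_poly M) M $$ (a, b) = 0\<^sub>m n n $$ (a, b)"
    using a b by (simp add: p_def)
qed (use M in auto)

lemma mat_poly_eval_cofactor_mult:
  fixes M :: "real mat"
  assumes M: "M \<in> carrier_mat n n" and cp: "char_poly M = [:-l, 1:] * g"
  shows "mat_poly_eval g M * M = l \<cdot>\<^sub>m mat_poly_eval g M"
proof (rule eq_matI)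
  let ?G = "mat_poly_eval g M"
  have CH: "?G * M - l \<cdot>\<^sub>m ?G = 0\<^sub>m n n"
    using mat_poly_eval_char_poly[OF M] unfolding cp mat_poly_eval_linear_factor[OF M] .
  fix p q assume "p < dim_row (l \<cdot>\<^sub>m ?G)" "q < dim_col (l \<cdot>\<^sub>m ?G)"
  then have pq: "p < n" "q < n"
    using M by auto
  have "(?G * M - l \<cdot>\<^sub>m ?G) $$ (p, q) = 0"
    using CH pq by simp
  then show "(?G * M) $$ (p, q) = (l \<cdot>\<^sub>m ?G) $$ (p, q)"
    using M pq by simp
qed (use M in auto)

lemma row_eq_smult_left_eigenvector:
  fixes M G :: "real mat"
  assumes M: "M \<in> carrier_mat n n" and G: "G \<in> carrier_mat n n" and GM: "G * M = l \<cdot>\<^sub>m G"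
    and line: "eigenspace_line (transpose_mat M) n l z" and p: "p < n"
  obtains d where "row G p = d \<cdot>\<^sub>v z"
proof -
  have "transpose_mat M *\<^sub>v row G p = l \<cdot>\<^sub>v row G p"
  proof (rule eq_vecI)
    fix q assume "q < dim_vec (l \<cdot>\<^sub>v row G p)"
    then have q: "q < n"
      using G by simp
    have "(transpose_mat M *\<^sub>v row G p) $ q = (G * M) $$ (p, q)"
      using G M p q by (simp add: comm_scalar_prod[of _ n])
    then show "(transpose_mat M *\<^sub>v row G p) $ q = (l \<cdot>\<^sub>v row G p) $ q"
      using G p q by (simp add: GM)
  qed (use G M in simp)
  moreover have "row G p \<in> carrier_vec n"
    using G row_carrier[of G p] by simp
  ultimately show thesis
    using line that unfolding eigenspace_line_def by blast
qed

lemma linear_factor_char_poly_simple: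
  fixes M :: "real mat"
  assumes M: "M \<in> carrier_mat n n" and simple: "simple_eigenvalue M l"
  obtains g where "char_poly M = [:-l, 1:] * g" and "poly g l \<noteq> 0"
proof -
  have "char_poly M \<noteq> 0"
    using degree_monic_char_poly[OF M] by auto
  from order_decomp[OF this, of l] simple obtain g
    where "char_poly M = [:-l, 1:] * g" and "\<not> [:-l, 1:] dvd g"
    unfolding simple_eigenvalue_def by auto
  then show thesis
    using that poly_eq_0_iff_dvd[of g l] by blast
qed

theorem algebraically_positive_if_simple_positive_eigenvectors:
  fixes M :: "real mat"
  assumes M: "M \<in> carrier_mat n n" and n: "0 < n"
    and w: "w \<in> carrier_vec n" "\<forall>i<n. 0 < w $ i" and z: "z \<in> carrier_vec n" "\<forall>i<n. 0 < z $ i"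
    and Mw: "M *\<^sub>v w = l \<cdot>\<^sub>v w" and Mz: "transpose_mat M *\<^sub>v z = l \<cdot>\<^sub>v z"
    and simple: "simple_eigenvalue M l"
  shows "algebraically_positive M"
proof -
  have zw: "0 < z \<bullet> w"
    unfolding scalar_prod_def using w z n by (intro sum_pos) auto
  have MT: "transpose_mat M \<in> carrier_mat n n"
    using M by simp
  have "eigenspace_line (transpose_mat M) n l z"
    using simple_eigenvalue_iff_eigenspace_line[OF MT n z(1) _ w(1) Mz _] M Mw simple z(2)[rule_format, OF n] zw
    by (simp add: simple_eigenvalue_def comm_scalar_prod[OF w(1) z(1)])
  obtain g where cp: "char_poly M = [:-l, 1:] * g" and gl: "poly g l \<noteq> 0"
    using linear_factor_char_poly_simple[OF M simple] .
  define G where "G = mat_poly_eval g M"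
  have G: "G \<in> carrier_mat n n"
    unfolding G_def using mat_poly_eval_carrier[OF M] .
  have GM: "G * M = l \<cdot>\<^sub>m G"
    unfolding G_def using mat_poly_eval_cofactor_mult[OF M cp] .
  have row: "row G p = (poly g l * w $ p / (z \<bullet> w)) \<cdot>\<^sub>v z" if p: "p < n" for p
  proof -
    obtain d where d: "row G p = d \<cdot>\<^sub>v z"
      using row_eq_smult_left_eigenvector[OF M G GM \<open>eigenspace_line (transpose_mat M) n l z\<close> p] .
    have "poly g l * w $ p = (G *\<^sub>v w) $ p"
      using mat_poly_eval_mult_eigenvector[OF M w(1) Mw, of g] p w by (simp add: G_def)
    also have "\<dots> = d * (z \<bullet> w)"
      using G p w z by (simp add: d)
    finally show ?thesis
      using d zw by simp
  qed
  define f where "f = Polynomial.smult ((z \<bullet> w) / poly g l) g"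
  show ?thesis
    unfolding algebraically_positive_def
  proof (intro conjI exI allI impI)
    show "square_mat M"
      using M by simp
    fix p q assume "p < dim_row M" "q < dim_col M"
    then have p: "p < n" and q: "q < n"
      using M by auto
    have "mat_poly_eval f M $$ (p, q) = (z \<bullet> w) / poly g l * row G p $ q"
      using G M p q by (simp add: f_def G_def mat_poly_eval_smult[OF M])
    also have "\<dots> = w $ p * z $ q"
      using row[OF p] q z zw gl by simp
    also have "\<dots> > 0"
      using w z p q by simp
    finally show "mat_poly_eval f M $$ (p, q) > 0" .
  qed
qed

section \<open>The matrix B\<close>

definition thm23_w :: "nat \<Rightarrow> nat \<Rightarrow> nat \<Rightarrow> real vec \<Rightarrow> real vec" where
  "thm23_w n k j u = vec (k + n) (\<lambda>i. if i < k then u $ (j - 1) else u $ (i - k))"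

definition thm23_z :: "nat \<Rightarrow> nat \<Rightarrow> real mat \<Rightarrow> nat \<Rightarrow> real \<Rightarrow> real vec \<Rightarrow> real vec" where
  "thm23_z n k A j l v = vec (k + n) (\<lambda>i. if i < k then A $$ (0, j - 1) * v $ 0 / l else v $ (i - k))"

lemma thm23_B_carrier: "thm23_B n k A j l \<in> carrier_mat (k + n) (k + n)"
  unfolding thm23_B_def by simp

text \<open>The entries with 0-based indices: the first k rows form a path 0 \<rightarrow> 1 \<rightarrow> ... \<rightarrow> k-1 \<rightarrow> k+j-1.\<close>
lemma index_thm23_B:
  assumes k: "k \<ge> 1" and j: "j \<ge> 1" and p: "p < k + n" and q: "q < k + n"
  shows "thm23_B n k A j l $$ (p, q) =
   (if p < k then (if q = p then 2 * l else if (p < k - 1 \<and> q = p + 1) \<or> (p = k - 1 \<and> q = k + (j - 1)) then - l else 0)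
    else if q < k then (if p = k \<and> q = 0 then - A $$ (0, j - 1) else 0)
    else if p = k \<and> q = k + (j - 1) then 2 * A $$ (0, j - 1) else A $$ (p - k, q - k))"
proof -
  have pairs: "(P, Q) \<in> {(k, k + j)} \<union> {(i, i + 1) | i. 1 \<le> i \<and> i \<le> k - 1}
      \<longleftrightarrow> (P = k \<and> Q = k + j) \<or> (1 \<le> P \<and> P \<le> k - 1 \<and> Q = P + 1)" for P Q :: nat
    by auto
  have "thm23_B n k A j l $$ (p, q) = (let p = p + 1; q = q + 1; a = (\<lambda>r s. A $$ (r - 1, s - 1)) in
     if p = q \<and> p \<in> {1..k} then 2 * l
     else if (p, q) \<in> {(k, k + j)} \<union> {(i, i + 1) | i. 1 \<le> i \<and> i \<le> k - 1} then - l
     else if (p, q) = (k + 1, 1) then - a 1 j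
     else if p \<in> {k + 1..k + n} \<and> q \<in> {k + 1..k + n} \<and> (p, q) \<noteq> (k + 1, k + j) then a (p - k) (q - k)
     else if (p, q) = (k + 1, k + j) then 2 * a 1 j
     else 0)"
    unfolding thm23_B_def index_mat(1)[OF p q] split by (rule refl)
  note B = this[unfolded Let_def pairs]
  show ?thesis
  proof (cases "p < k")
    case True
    then show ?thesis
      unfolding B using k j p q
      by (cases "q = p"; cases "(p < k - 1 \<and> q = p + 1) \<or> (p = k - 1 \<and> q = k + (j - 1))") auto
  next
    case False
    then show ?thesis
      unfolding B using k j p q
      by (cases "q < k"; cases "p = k \<and> q = 0"; cases "p = k \<and> q = k + (j - 1)") auto
  qed
qed

lemma sum_lessThan_add: "(\<Sum>q<k + n. f q) = (\<Sum>q<k. f q) + (\<Sum>i<(n::nat). f (k + i))"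
  by (induct n) (auto simp: add.assoc)

lemma sum_if_eq_mult: "t < (N::nat) \<Longrightarrow> (\<Sum>q<N. (if q = t then c else 0) * f q) = c * (f t :: real)"
  by (subst sum.remove[of _ t]) auto

lemma sum_if_ge_mult:
  "(\<Sum>q<k + n. (if k \<le> q then g (q - k) else 0) * x $ q) = (\<Sum>i<(n::nat). g i * (x $ (k + i) :: real))"
  by (simp add: sum_lessThan_add)

lemma thm23_B_mult_vec_index:
  fixes A :: "real mat"
  assumes k: "k \<ge> 1" and j: "j \<in> {1..n}" and A: "A \<in> carrier_mat n n"
    and x: "x \<in> carrier_vec (k + n)" and p: "p < k + n"
  defines "y \<equiv> vec n (\<lambda>i. x $ (k + i))"
  shows "(thm23_B n k A j l *\<^sub>v x) $ p =
    (if p < k then 2 * l * x $ p - l * x $ (if p < k - 1 then p + 1 else k + (j - 1))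
     else if p = k then - A $$ (0, j - 1) * x $ 0 + (A *\<^sub>v y) $ 0 + A $$ (0, j - 1) * x $ (k + (j - 1))
     else (A *\<^sub>v y) $ (p - k))"
proof -
  let ?B = "thm23_B n k A j l" and ?a = "A $$ (0, j - 1)"
  have j1: "j \<ge> 1" and jn: "j \<le> n"
    using j by auto
  have e: "(?B *\<^sub>v x) $ p = (\<Sum>q<k + n. ?B $$ (p, q) * x $ q)"
    using thm23_B_carrier[of n k A j l] p x by (simp add: scalar_prod_def atLeast0LessThan)
  have Ay: "(A *\<^sub>v y) $ r = (\<Sum>i<n. A $$ (r, i) * x $ (k + i))" if "r < n" for r
    using A that by (simp add: scalar_prod_def atLeast0LessThan y_def)
  show ?thesis
  proof (cases "p < k")
    case True
    define t where "t = (if p < k - 1 then p + 1 else k + (j - 1))"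
    have t: "t < k + n" "t \<noteq> p"
      using True jn j1 by (auto simp: t_def)
    have "(\<Sum>q<k + n. ?B $$ (p, q) * x $ q)
        = (\<Sum>q<k + n. (if q = p then 2 * l else 0) * x $ q + (if q = t then - l else 0) * x $ q)"
      by (rule sum.cong[OF refl]) (use True k j1 p t in \<open>auto simp: index_thm23_B t_def\<close>)
    also have "\<dots> = 2 * l * x $ p - l * x $ t"
      by (simp only: sum.distrib sum_if_eq_mult[OF p] sum_if_eq_mult[OF t(1)]; simp)
    finally show ?thesis
      using e True by (simp add: t_def)
  next
    case False
    show ?thesis
    proof (cases "p = k")
      case True
      have t: "k + (j - 1) < k + n" "0 < k + n"
        using jn j1 by auto
      have "(\<Sum>q<k + n. ?B $$ (p, q) * x $ q)
          = (\<Sum>q<k + n. (if q = 0 then - ?a else 0) * x $ q + (if q = k + (j - 1) then ?a else 0) * x $ q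
           + (if k \<le> q then A $$ (0, q - k) else 0) * x $ q)"
        by (rule sum.cong[OF refl]) (use True k j1 p in \<open>auto simp: index_thm23_B\<close>)
      also have "\<dots> = - ?a * x $ 0 + ?a * x $ (k + (j - 1)) + (A *\<^sub>v y) $ 0"
        using jn j1 by (simp only: sum.distrib sum_if_eq_mult[OF t(1)] sum_if_eq_mult[OF t(2)]
            sum_if_ge_mult[where g = "\<lambda>i. A $$ (0, i)"] Ay; simp)
      finally show ?thesis
        using e True by simp
    next
      case False
      have "(\<Sum>q<k + n. ?B $$ (p, q) * x $ q) = (\<Sum>q<k + n. (if k \<le> q then A $$ (p - k, q - k) else 0) * x $ q)"
        by (rule sum.cong[OF refl]) (use False \<open>\<not> p < k\<close> k j1 p in \<open>auto simp: index_thm23_B\<close>)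
      also have "\<dots> = (A *\<^sub>v y) $ (p - k)"
        using p \<open>\<not> p < k\<close> by (simp only: sum_if_ge_mult[where g = "\<lambda>i. A $$ (p - k, i)"] Ay; simp)
      finally show ?thesis
        using e False \<open>\<not> p < k\<close> by simp
    qed
  qed
qed

lemma thm23_B_transpose_mult_vec_index:
  fixes A :: "real mat"
  assumes k: "k \<ge> 1" and j: "j \<in> {1..n}" and A: "A \<in> carrier_mat n n"
    and x: "x \<in> carrier_vec (k + n)" and q: "q < k + n"
  defines "y \<equiv> vec n (\<lambda>i. x $ (k + i))"
  shows "(transpose_mat (thm23_B n k A j l) *\<^sub>v x) $ q =
    (if q < k then 2 * l * x $ q - (if 0 < q then l * x $ (q - 1) else 0) - (if q = 0 then A $$ (0, j - 1) * x $ k else 0)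
     else (transpose_mat A *\<^sub>v y) $ (q - k)
       + (if q = k + (j - 1) then A $$ (0, j - 1) * x $ k - l * x $ (k - 1) else 0))"
proof -
  let ?B = "thm23_B n k A j l" and ?a = "A $$ (0, j - 1)"
  have j1: "j \<ge> 1" and jn: "j \<le> n"
    using j by auto
  have e: "(transpose_mat ?B *\<^sub>v x) $ q = (\<Sum>p<k + n. ?B $$ (p, q) * x $ p)"
    using thm23_B_carrier[of n k A j l] q x by (simp add: scalar_prod_def atLeast0LessThan)
  have Ay: "(transpose_mat A *\<^sub>v y) $ r = (\<Sum>i<n. A $$ (i, r) * x $ (k + i))" if "r < n" for r
    using A that by (simp add: scalar_prod_def atLeast0LessThan y_def)
  show ?thesis
  proof (cases "q < k")
    case True
    have t: "q - 1 < k + n" "k < k + n"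
      using q jn j1 by auto
    have "(\<Sum>p<k + n. ?B $$ (p, q) * x $ p) = (\<Sum>p<k + n. (if p = q then 2 * l else 0) * x $ p
        + (if p = q - 1 then (if 0 < q then - l else 0) else 0) * x $ p
        + (if p = k then (if q = 0 then - ?a else 0) else 0) * x $ p)"
      by (rule sum.cong[OF refl]) (use True k j1 q in \<open>auto simp: index_thm23_B\<close>)
    also have "\<dots> = 2 * l * x $ q - (if 0 < q then l * x $ (q - 1) else 0) - (if q = 0 then ?a * x $ k else 0)"
      by (simp only: sum.distrib sum_if_eq_mult[OF q] sum_if_eq_mult[OF t(1)] sum_if_eq_mult[OF t(2)]; simp)
    finally show ?thesis
      using e True by simp
  next
    case False
    have t: "k - 1 < k + n" "k < k + n"
      using q jn j1 by auto
    have "(\<Sum>p<k + n. ?B $$ (p, q) * x $ p) = (\<Sum>p<k + n. (if k \<le> p then A $$ (p - k, q - k) else 0) * x $ p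
        + (if p = k then (if q = k + (j - 1) then ?a else 0) else 0) * x $ p
        + (if p = k - 1 then (if q = k + (j - 1) then - l else 0) else 0) * x $ p)"
      by (rule sum.cong[OF refl]) (use False k j1 q in \<open>auto simp: index_thm23_B\<close>)
    also have "\<dots> = (transpose_mat A *\<^sub>v y) $ (q - k) + (if q = k + (j - 1) then ?a * x $ k - l * x $ (k - 1) else 0)"
      using q False by (simp only: sum.distrib sum_if_eq_mult[OF t(1)] sum_if_eq_mult[OF t(2)]
          sum_if_ge_mult[where g = "\<lambda>i. A $$ (i, q - k)"] Ay; simp)
    finally show ?thesis
      using e False by simp
  qed
qed

lemma lower_part_thm23_w: "vec n (\<lambda>i. thm23_w n k j u $ (k + i)) = u" if "u \<in> carrier_vec n"
  using that by (intro eq_vecI) (auto simp: thm23_w_def)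

lemma lower_part_thm23_z: "vec n (\<lambda>i. thm23_z n k A j l v $ (k + i)) = v" if "v \<in> carrier_vec n"
  using that by (intro eq_vecI) (auto simp: thm23_z_def)

lemma thm23_B_right_eigenvector:
  fixes A :: "real mat"
  assumes k: "k \<ge> 1" and j: "j \<in> {1..n}" and A: "A \<in> carrier_mat n n"
    and u: "u \<in> carrier_vec n" and Au: "A *\<^sub>v u = l \<cdot>\<^sub>v u"
  shows "thm23_B n k A j l *\<^sub>v thm23_w n k j u = l \<cdot>\<^sub>v thm23_w n k j u"
proof (rule eq_vecI)
  let ?w = "thm23_w n k j u"
  have w: "?w \<in> carrier_vec (k + n)"
    by (simp add: thm23_w_def)
  have j0: "j - 1 < n"
    using j by auto
  have Aui: "(A *\<^sub>v u) $ i = l * u $ i" if "i < n" for i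
    using that u by (simp add: Au)
  fix p assume "p < dim_vec (l \<cdot>\<^sub>v ?w)"
  then have p: "p < k + n"
    by (simp add: thm23_w_def)
  show "(thm23_B n k A j l *\<^sub>v ?w) $ p = (l \<cdot>\<^sub>v ?w) $ p"
    unfolding thm23_B_mult_vec_index[OF k j A w p] lower_part_thm23_w[OF u]
    using p j0 k w Aui[of 0] Aui[of "p - k"] by (auto simp: thm23_w_def algebra_simps)
qed (simp add: thm23_w_def thm23_B_def)

lemma thm23_B_left_eigenvector:
  fixes A :: "real mat"
  assumes k: "k \<ge> 1" and j: "j \<in> {1..n}" and A: "A \<in> carrier_mat n n" and l: "l \<noteq> 0"
    and v: "v \<in> carrier_vec n" and Av: "transpose_mat A *\<^sub>v v = l \<cdot>\<^sub>v v"
  shows "transpose_mat (thm23_B n k A j l) *\<^sub>v thm23_z n k A j l v = l \<cdot>\<^sub>v thm23_z n k A j l v"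
proof (rule eq_vecI)
  let ?z = "thm23_z n k A j l v"
  have z: "?z \<in> carrier_vec (k + n)"
    by (simp add: thm23_z_def)
  have Avi: "(transpose_mat A *\<^sub>v v) $ i = l * v $ i" if "i < n" for i
    using that v by (simp add: Av)
  have n: "0 < n"
    using j by auto
  fix q assume "q < dim_vec (l \<cdot>\<^sub>v ?z)"
  then have q: "q < k + n"
    by (simp add: thm23_z_def)
  show "(transpose_mat (thm23_B n k A j l) *\<^sub>v ?z) $ q = (l \<cdot>\<^sub>v ?z) $ q"
    unfolding thm23_B_transpose_mult_vec_index[OF k j A z q] lower_part_thm23_z[OF v]
    using q k n z l Avi[of "q - k"] by (auto simp: thm23_z_def field_simps)
qed (simp add: thm23_z_def thm23_B_def)

lemma thm23_B_eigenvector_top: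
  fixes A :: "real mat"
  assumes k: "k \<ge> 1" and j: "j \<in> {1..n}" and A: "A \<in> carrier_mat n n" and l: "l \<noteq> 0"
    and x: "x \<in> carrier_vec (k + n)" and Bx: "thm23_B n k A j l *\<^sub>v x = l \<cdot>\<^sub>v x" and p: "p < k"
  shows "x $ p = x $ (k + (j - 1))"
proof -
  have next_eq: "x $ p = x $ (if p < k - 1 then p + 1 else k + (j - 1))" if p: "p < k" for p
    using arg_cong[OF Bx, of "\<lambda>v. v $ p"] thm23_B_mult_vec_index[OF k j A x, of p] p x l
    by (simp add: algebra_simps)
  have "p \<le> k - 1"
    using p by simp
  then have "x $ p = x $ (k - 1)"
  proof (induction p rule: inc_induct)
    case (step p)
    then show ?case
      using next_eq[of p] by simp
  qed simp
  also have "\<dots> = x $ (k + (j - 1))"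
    using next_eq[of "k - 1"] k by simp
  finally show ?thesis .
qed

text \<open>On a vector that is constant on its first k coordinates, the entry -a_1j in column 0 and
  the doubling of a_1j in row k cancel, so row k of B x = l x is row 0 of A y = l y.\<close>
lemma thm23_B_eigenspace_line:
  fixes A :: "real mat"
  assumes k: "k \<ge> 1" and j: "j \<in> {1..n}" and A: "A \<in> carrier_mat n n" and l: "l \<noteq> 0"
    and u: "u \<in> carrier_vec n" and line: "eigenspace_line A n l u"
  shows "eigenspace_line (thm23_B n k A j l) (k + n) l (thm23_w n k j u)"
  unfolding eigenspace_line_def
proof (intro ballI impI)
  fix x assume x: "x \<in> carrier_vec (k + n)" and Bx: "thm23_B n k A j l *\<^sub>v x = l \<cdot>\<^sub>v x"
  define y where "y = vec n (\<lambda>i. x $ (k + i))"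
  have j0: "j - 1 < n"
    using j by auto
  have row: "(thm23_B n k A j l *\<^sub>v x) $ p = l * x $ p" if "p < k + n" for p
    using Bx that x by simp
  note top = thm23_B_eigenvector_top[OF k j A l x Bx]
  have "A *\<^sub>v y = l \<cdot>\<^sub>v y"
  proof (rule eq_vecI)
    fix i assume "i < dim_vec (l \<cdot>\<^sub>v y)"
    then have i: "i < n"
      by (simp add: y_def)
    show "(A *\<^sub>v y) $ i = (l \<cdot>\<^sub>v y) $ i"
      using row[of "k + i"] thm23_B_mult_vec_index[OF k j A x, of "k + i"] top[of 0] k i
      unfolding y_def by (cases i) auto
  qed (use A in \<open>simp add: y_def\<close>)
  then obtain d where d: "y = d \<cdot>\<^sub>v u"
    using line unfolding eigenspace_line_def by (auto simp: y_def)
  have lower: "x $ (k + i) = d * u $ i" if "i < n" for i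
    using arg_cong[OF d, of "\<lambda>v. v $ i"] that u by (simp add: y_def)
  show "\<exists>d. x = d \<cdot>\<^sub>v thm23_w n k j u"
  proof (intro exI eq_vecI)
    fix p assume "p < dim_vec (d \<cdot>\<^sub>v thm23_w n k j u)"
    then have p: "p < k + n"
      by (simp add: thm23_w_def)
    show "x $ p = (d \<cdot>\<^sub>v thm23_w n k j u) $ p"
      using p top[of p] lower[of "j - 1"] lower[of "p - k"] j0 by (cases "p < k") (auto simp: thm23_w_def)
  qed (use x in \<open>simp add: thm23_w_def\<close>)
qed

lemma thm23_w_pos:
  assumes "j \<in> {1..n}" and "\<forall>i<n. 0 < u $ i"
  shows "\<forall>i<k + n. 0 < thm23_w n k j u $ i"
  using assms by (auto simp: thm23_w_def)

lemma thm23_z_pos: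
  assumes "0 < n" and "0 < A $$ (0, j - 1)" and "0 < l" and "\<forall>i<n. 0 < v $ i"
  shows "\<forall>i<k + n. 0 < thm23_z n k A j l v $ i"
  using assms by (auto simp: thm23_z_def)

theorem theorem2p3:
  fixes n k j :: nat and A :: "real mat" and l :: real and u v :: "real vec"
  assumes "n \<ge> 1" and "k \<ge> 1"
    and "A \<in> carrier_mat n n"
    and "j \<in> {1..n}"
    and "A $$ (0, j - 1) > 0"
    and "l > 0"
    and "simple_eigenvalue A l"
    and "u \<in> carrier_vec n" and "v \<in> carrier_vec n"
    and "\<forall>i < n. u $ i > 0" and "\<forall>i < n. v $ i > 0"
    and "A *\<^sub>v u = l \<cdot>\<^sub>v u"
    and "transpose_mat A *\<^sub>v v = l \<cdot>\<^sub>v v"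
  shows "simple_eigenvalue (thm23_B n k A j l) l
    \<and> thm23_B n k A j l *\<^sub>v vec (k+n) (\<lambda>i. if i < k then u $ (j - 1) else u $ (i - k))
        = l \<cdot>\<^sub>v vec (k+n) (\<lambda>i. if i < k then u $ (j - 1) else u $ (i - k))
    \<and> transpose_mat (thm23_B n k A j l) *\<^sub>v
          vec (k+n) (\<lambda>i. if i < k then A $$ (0, j - 1) * v $ 0 / l else v $ (i - k))
        = l \<cdot>\<^sub>v vec (k+n) (\<lambda>i. if i < k then A $$ (0, j - 1) * v $ 0 / l else v $ (i - k))
    \<and> algebraically_positive (thm23_B n k A j l)"
proof -
  note n = assms(1) and k = assms(2) and A = assms(3) and j = assms(4) and a = assms(5)
    and l = assms(6) and simple = assms(7) and u = assms(8) and v = assms(9) and u_pos = assms(10)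
    and v_pos = assms(11) and Au = assms(12) and Av = assms(13)
  let ?B = "thm23_B n k A j l" and ?w = "thm23_w n k j u" and ?z = "thm23_z n k A j l v"
  have w: "?w \<in> carrier_vec (k + n)" and z: "?z \<in> carrier_vec (k + n)"
    by (simp_all add: thm23_w_def thm23_z_def)
  have w_pos: "\<forall>i<k + n. 0 < ?w $ i" and z_pos: "\<forall>i<k + n. 0 < ?z $ i"
    using thm23_w_pos[OF j u_pos] thm23_z_pos[OF _ a l v_pos] n by simp_all
  have "0 < v \<bullet> u" and "0 < ?z \<bullet> ?w"
    using u v u_pos v_pos w z w_pos z_pos n k unfolding scalar_prod_def by (auto intro!: sum_pos)
  then have "eigenspace_line A n l u"
    using simple simple_eigenvalue_iff_eigenspace_line[OF A _ u _ v Au Av] u_pos[rule_format, of 0] n by simp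
  then have "eigenspace_line ?B (k + n) l ?w"
    using thm23_B_eigenspace_line[OF k j A _ u] l by simp
  moreover have Bw: "?B *\<^sub>v ?w = l \<cdot>\<^sub>v ?w" and Bz: "transpose_mat ?B *\<^sub>v ?z = l \<cdot>\<^sub>v ?z"
    using thm23_B_right_eigenvector[OF k j A u Au] thm23_B_left_eigenvector[OF k j A _ v Av] l by simp_all
  ultimately have "simple_eigenvalue ?B l"
    using simple_eigenvalue_iff_eigenspace_line[OF thm23_B_carrier _ w _ z Bw Bz] \<open>0 < ?z \<bullet> ?w\<close>
      w_pos[rule_format, of 0] k
    by simp
  moreover have "algebraically_positive ?B"
    using algebraically_positive_if_simple_positive_eigenvectors[OF thm23_B_carrier _ w w_pos z z_pos Bw Bz]
      \<open>simple_eigenvalue ?B l\<close> k by simp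
  ultimately show ?thesis
    using Bw Bz unfolding thm23_w_def thm23_z_def by blast
qed

end
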